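(* Let $\mu>0$ and let $\Omega$ be an optimal domain, with $\lambda_1,\lambda_2$ as in the optimality condition above, and set $Q=(\lambda_2/\mu,\,-\lambda_1/\mu)$ and $\lambda=\dfrac{2\mu A(\Omega)-E(\Omega)}{2\pi}$. Then on every open arc of $\partial\Omega$ where $k>0$ (strictly convex part), $k$ is smooth and $$k''(s)=-\tfrac12 k(s)^3-\lambda k(s)+\mu ,$$ and at every point $M(s)=(x(s),y(s))$ of $\partial\Omega$, $$\langle \overrightarrow{QM(s)},\mathsf{n}(s)\rangle=\frac{\lambda}{\mu}+\frac{1}{2\mu}k(s)^2,$$ where $\mathsf{n}(s)=(\sin\theta(s),-\cos\theta(s))$ is the exterior unit normal.
   Context: Let $\mathcal{C}$ be the class of bounded open convex sets $\Omega\subset\mathbb{R}^2$ whose boundary, of length $P$, is parametrized by arc length $s\mapsto(x(s),y(s))$ with $x'=\cos\theta$, $y'=\sin\theta$, $\theta\in W^{1,2}(0,P)$, $\theta'\ge0$ a.e., $\theta(P)=\theta(0)+2\pi$, $\int_0^P\cos\theta=\int_0^P\sin\theta=0$. Curvature $k=\theta'$, $E(\Omega)=\frac12\int_0^Pk^2ds$, $A$ area, $P$ perimeter, $J_\mu=E+\mu A$. An optimal domain is $\Omega\in\mathcal{C}$ with $P(\Omega)=2\pi$ minimizing $J_\mu$ among sets of $\mathcal{C}$ of perimeter $2\pi$. Optimality condition: with $x(0)=y(0)=0$ there exist reals $\lambda_1,\lambda_2,c$ with $\theta'(s)=\frac{\mu}{2}\big(\frac{\lambda_1^2+\lambda_2^2}{\mu^2}+\frac{2c}{\mu}-[x(s)-\frac{\lambda_2}{\mu}]^2-[y(s)+\frac{\lambda_1}{\mu}]^2\big)^-$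 for all $s$. *)

theory Defs
  imports "HOL-Analysis.Analysis"
begin

definition negpart :: "real \<Rightarrow> real" where
  "negpart t = max 0 (- t)"

definition xc :: "(real \<Rightarrow> real) \<Rightarrow> real \<Rightarrow> real" where
  "xc \<theta> s = integral {0..s} (\<lambda>t. cos (\<theta> t))"

definition yc :: "(real \<Rightarrow> real) \<Rightarrow> real \<Rightarrow> real" where
  "yc \<theta> s = integral {0..s} (\<lambda>t. sin (\<theta> t))"

text \<open>Class C with perimeter P: theta in W^{1,2}(0,P) written as
  theta(s) = theta(0) + int_0^s k with k in L^2 (k = theta'), k >= 0 a.e.,
  total turning 2 pi, closed curve.\<close>
definition admissible :: "real \<Rightarrow> (real \<Rightarrow> real) \<Rightarrow> (real \<Rightarrow> real) \<Rightarrow> bool" where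
  "admissible P \<theta> k \<longleftrightarrow>
     0 < P \<and>
     k absolutely_integrable_on {0..P} \<and>
     (\<lambda>s. (k s)\<^sup>2) integrable_on {0..P} \<and>
     negligible {s \<in> {0..P}. k s < 0} \<and>
     (\<forall>s\<in>{0..P}. \<theta> s = \<theta> 0 + integral {0..s} k) \<and>
     \<theta> P = \<theta> 0 + 2 * pi \<and>
     integral {0..P} (\<lambda>s. cos (\<theta> s)) = 0 \<and>
     integral {0..P} (\<lambda>s. sin (\<theta> s)) = 0"

definition energy :: "real \<Rightarrow> (real \<Rightarrow> real) \<Rightarrow> real" where
  "energy P k = integral {0..P} (\<lambda>s. (k s)\<^sup>2) / 2"

text \<open>Enclosed area via Green's formula A = 1/2 int (x y' - y x').\<close>
definition area :: "real \<Rightarrow> (real \<Rightarrow> real) \<Rightarrow> real" where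
  "area P \<theta> = integral {0..P} (\<lambda>s. xc \<theta> s * sin (\<theta> s) - yc \<theta> s * cos (\<theta> s)) / 2"

definition Jmu :: "real \<Rightarrow> real \<Rightarrow> (real \<Rightarrow> real) \<Rightarrow> (real \<Rightarrow> real) \<Rightarrow> real" where
  "Jmu \<mu> P \<theta> k = energy P k + \<mu> * area P \<theta>"

definition optimal :: "real \<Rightarrow> (real \<Rightarrow> real) \<Rightarrow> (real \<Rightarrow> real) \<Rightarrow> bool" where
  "optimal \<mu> \<theta> k \<longleftrightarrow> admissible (2 * pi) \<theta> k \<and>
     (\<forall>\<theta>' k'. admissible (2 * pi) \<theta>' k' \<longrightarrow> Jmu \<mu> (2 * pi) \<theta> k \<le> Jmu \<mu> (2 * pi) \<theta>' k')"

definition perext :: "(real \<Rightarrow> real) \<Rightarrow> real \<Rightarrow> real" where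
  "perext f s = f (s - 2 * pi * of_int \<lfloor>s / (2 * pi)\<rfloor>)"

definition smooth_on :: "real set \<Rightarrow> (real \<Rightarrow> real) \<Rightarrow> bool" where
  "smooth_on S f \<longleftrightarrow> (\<exists>D. (\<forall>s\<in>S. D 0 s = f s) \<and>
     (\<forall>n. \<forall>s\<in>S. (D n has_real_derivative D (Suc n) s) (at s)))"

end

theory Submission
  imports Defs "HOL-Computational_Algebra.Polynomial"
begin

(* Write Q = (q1, q2) and let the optimality condition say k = mu/2 (|M - Q|^2 - R2)^+.
   Then k is continuous, so theta is C^1 with theta' = k, and the boundary point M is C^1.
   (1) First integral.  <QM, n> - k^2 / (2 mu) has zero derivative on [0, 2 pi]: the
       derivative of <QM, n> is k <QM, tau>, and that of k^2 = mu^2/4 ((|M - Q|^2 - R2)^+)^2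
       is 2 mu k <QM, tau>, because t |-> (t^+)^2 is C^1.  Integrating over the closed curve,
       int <QM, n> = 2 A and int k^2 = 2 E identify the constant as lambda / mu.
   (2) Curvature equation.  After extending the parametrisation periodically to the real
       line, on an open arc where k > 0 the positive part is inactive, so k' = mu <QM, tau>
       and k'' = mu (1 - k <QM, n>) = mu - lambda k - k^3 / 2 by (1).  A solution of
       f'' = P(f) with P a polynomial is C^infinity by bootstrapping. *)

lemma has_real_derivative_glue:
  fixes f :: "real \<Rightarrow> real"
  assumes "(f has_real_derivative D) (at x within {..x})"
    and "(f has_real_derivative D) (at x within {x..})"
  shows "(f has_real_derivative D) (at x)"
proof -
  have "(f has_real_derivative D) (at x within ({..x} \<union> {x..}))"
    using assms unfolding has_field_derivative_iff by (subst at_within_union) (rule filterlim_sup)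
  moreover have "{..x} \<union> {x..} = (UNIV::real set)" by auto
  ultimately show ?thesis by simp
qed

text \<open>The square of the positive part, \<open>(t\<^sup>+)\<^sup>2\<close>, is differentiable with derivative \<open>2 t\<^sup>+\<close>;
  this is what makes the first integral of the curvature equation differentiable
  across the points where the curvature vanishes.\<close>
definition pos_sq :: "real \<Rightarrow> real" where
  "pos_sq t = (max 0 t)\<^sup>2"

lemma pos_sq_deriv: "(pos_sq has_real_derivative 2 * max 0 t) (at t)"
proof -
  consider "t > 0" | "t < 0" | "t = 0" by linarith
  then show ?thesis
  proof cases
    case 1
    have "((\<lambda>t. t\<^sup>2) has_real_derivative 2 * max 0 t) (at t)"
      using 1 by (auto intro!: derivative_eq_intros)
    then show ?thesis
      by (rule has_field_derivative_transform_within_open[where S="{0<..}"])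
         (use 1 in \<open>auto simp: pos_sq_def\<close>)
  next
    case 2
    have "((\<lambda>t. 0) has_real_derivative 2 * max 0 t) (at t)"
      using 2 by (auto intro!: derivative_eq_intros)
    then show ?thesis
      by (rule has_field_derivative_transform_within_open[where S="{..<0}"])
         (use 2 in \<open>auto simp: pos_sq_def\<close>)
  next
    case 3
    have "((\<lambda>t. t\<^sup>2) has_real_derivative 0) (at 0 within {0..})"
      by (auto intro!: derivative_eq_intros)
    then have right: "(pos_sq has_real_derivative 0) (at 0 within {0..})"
      by (rule has_field_derivative_transform_within[where d=1]) (auto simp: pos_sq_def)
    have "((\<lambda>t. 0) has_real_derivative 0) (at 0 within {..0})"
      by (auto intro!: derivative_eq_intros)
    then have left: "(pos_sq has_real_derivative 0) (at 0 within {..0})"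
      by (rule has_field_derivative_transform_within[where d=1]) (auto simp: pos_sq_def)
    show ?thesis using has_real_derivative_glue[OF left right] 3 by simp
  qed
qed

lemma pos_sq_chain:
  assumes "(g has_real_derivative g') (at x within S)" and "D = 2 * max 0 (g x) * g'"
  shows "((\<lambda>x. pos_sq (g x)) has_real_derivative D) (at x within S)"
  using DERIV_chain2[OF pos_sq_deriv assms(1)] assms(2) by simp

text \<open>Quasi-periodic extension of a function given on \<open>[0, T]\<close>: \<open>pext T c f\<close> agrees with \<open>f\<close>
  on \<open>[0, T)\<close> and satisfies \<open>g (s + T) = g s + c\<close>.  With \<open>c = 0\<close> this is the periodic
  extension \<open>perext\<close>; with \<open>c = 2\<pi>\<close> it extends a tangent angle of total turning \<open>2\<pi>\<close>.\<close>
definition pext :: "real \<Rightarrow> real \<Rightarrow> (real \<Rightarrow> real) \<Rightarrow> real \<Rightarrow> real" where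
  "pext T c f s = f (s - T * of_int \<lfloor>s / T\<rfloor>) + c * of_int \<lfloor>s / T\<rfloor>"

lemma reduction_mod_period:
  fixes T s :: real
  assumes "T > 0"
  shows "s - T * of_int \<lfloor>s / T\<rfloor> \<in> {0..<T}"
proof -
  have "of_int \<lfloor>s / T\<rfloor> \<le> s / T" "s / T < of_int \<lfloor>s / T\<rfloor> + 1" by linarith+
  then have "T * of_int \<lfloor>s / T\<rfloor> \<le> s" "s < T * of_int \<lfloor>s / T\<rfloor> + T"
    using assms by (simp_all add: le_divide_eq divide_less_eq algebra_simps)
  then show ?thesis by auto
qed

lemma pext_shift:
  fixes T :: real
  assumes "T > 0"
  shows "pext T c f (s + T * of_int n) = pext T c f s + c * of_int n"
proof -
  have "(s + T * of_int n) / T = s / T + of_int n" using assms by (simp add: field_simps)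
  then have "\<lfloor>(s + T * of_int n) / T\<rfloor> = \<lfloor>s / T\<rfloor> + n" by simp
  then show ?thesis unfolding pext_def by (simp add: algebra_simps)
qed

lemma pext_base:
  fixes T :: real
  assumes "T > 0" "u \<in> {0..<T}"
  shows "pext T c f u = f u"
proof -
  have "\<lfloor>u / T\<rfloor> = 0" using assms by (simp add: floor_eq_iff field_simps)
  then show ?thesis by (simp add: pext_def)
qed

lemma pext_left:
  fixes T :: real
  assumes "T > 0" "u \<in> {-T..0}" "f T = f 0 + c"
  shows "pext T c f u = f (u + T) - c"
proof (cases "u = 0")
  case True
  then show ?thesis using pext_base[of T 0 c f] assms by simp
next
  case False
  then have "\<lfloor>u / T\<rfloor> = -1" using assms by (simp add: floor_eq_iff field_simps)
  then show ?thesis by (simp add: pext_def)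
qed

lemma pext_deriv_base:
  fixes T c :: real and f f' :: "real \<Rightarrow> real"
  assumes T: "T > 0"
    and deriv: "\<And>t. t \<in> {0..T} \<Longrightarrow> (f has_real_derivative f' t) (at t within {0..T})"
    and ends: "f T = f 0 + c" "f' T = f' 0"
    and t: "t \<in> {0..<T}"
  shows "(pext T c f has_real_derivative f' t) (at t)"
proof (cases "t = 0")
  case False
  then have "0 < t" "t < T" using t by auto
  then have "(f has_real_derivative f' t) (at t)" using deriv[of t] by (simp add: at_within_Icc_at)
  then show ?thesis
    by (rule has_field_derivative_transform_within_open[where S="{0<..<T}"])
       (use \<open>0 < t\<close> \<open>t < T\<close> pext_base[OF T] in auto)
next
  case True
  have "(pext T c f has_real_derivative f' 0) (at 0 within {0..T})"
    by (rule has_field_derivative_transform_within[OF deriv[of 0] T])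
       (use T pext_base[OF T] in auto)
  moreover have "at (0::real) within {0..T} = at 0 within {0..}"
    by (rule at_within_nhd[where S="{-1<..<T}"]) (use T in auto)
  ultimately have right: "(pext T c f has_real_derivative f' 0) (at 0 within {0..})" by simp
  have "(\<lambda>u. u + T) ` {-T..0} = {0..T}"
    by (auto intro!: image_eqI[where x="v - T" for v])
  then have "(f \<circ> (\<lambda>u. u + T) has_real_derivative f' T * 1) (at 0 within {-T..0})"
    by (intro DERIV_image_chain) (use deriv[of T] T in \<open>auto intro!: derivative_eq_intros\<close>)
  then have "((\<lambda>u. f (u + T) - c) has_real_derivative f' 0) (at 0 within {-T..0})"
    using ends(2) by (auto intro!: derivative_eq_intros simp: o_def)
  then have "(pext T c f has_real_derivative f' 0) (at 0 within {-T..0})"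
    by (rule has_field_derivative_transform_within[where d=T])
       (use T pext_left[OF T _ ends(1)] in auto)
  moreover have "at (0::real) within {-T..0} = at 0 within {..0}"
    by (rule at_within_nhd[where S="{-T<..<1}"]) (use T in auto)
  ultimately have left: "(pext T c f has_real_derivative f' 0) (at 0 within {..0})" by simp
  show ?thesis using has_real_derivative_glue[OF left right] True by simp
qed

lemma pext_deriv:
  fixes T c :: real and f f' :: "real \<Rightarrow> real"
  assumes T: "T > 0"
    and deriv: "\<And>t. t \<in> {0..T} \<Longrightarrow> (f has_real_derivative f' t) (at t within {0..T})"
    and ends: "f T = f 0 + c" "f' T = f' 0"
  shows "(pext T c f has_real_derivative f' (s - T * of_int \<lfloor>s / T\<rfloor>)) (at s)"
proof -
  define m where "m = \<lfloor>s / T\<rfloor>"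
  define t where "t = s - T * of_int m"
  have "t \<in> {0..<T}" using reduction_mod_period[OF T, of s] by (simp add: t_def m_def)
  from pext_deriv_base[OF T deriv ends this]
  have "(pext T c f has_real_derivative f' t) (at (s + (- T * of_int m)))"
    by (simp add: t_def)
  then have "((\<lambda>u. pext T c f (u + (- T * of_int m)) + c * of_int m)
      has_real_derivative f' t) (at s)"
    by (subst (asm) DERIV_shift) (auto intro!: derivative_eq_intros)
  moreover have "pext T c f (u + (- T * of_int m)) + c * of_int m = pext T c f u" for u
    using pext_shift[OF T, of c f "u + (- T * of_int m)" m] by simp
  ultimately show ?thesis by (simp add: t_def m_def)
qed

fun Cn :: "nat \<Rightarrow> real set \<Rightarrow> (real \<Rightarrow> real) \<Rightarrow> bool" where
  "Cn 0 S f = True"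
| "Cn (Suc n) S f = ((\<forall>s\<in>S. f differentiable at s) \<and> Cn n S (deriv f))"

lemma Cn_Suc_imp: "Cn (Suc n) S f \<Longrightarrow> Cn n S f"
  by (induction n arbitrary: f) auto

lemma differentiable_cong_open:
  fixes f g :: "real \<Rightarrow> real"
  assumes "open S" "x \<in> S" "\<And>y. y \<in> S \<Longrightarrow> f y = g y" "f differentiable at x"
  shows "g differentiable at x"
  using has_field_derivative_transform_within_open[of f "deriv f x" x S g] assms
  by (metis DERIV_deriv_iff_real_differentiable real_differentiable_def)

lemma deriv_cong_open:
  fixes f g :: "real \<Rightarrow> real"
  assumes "open S" "x \<in> S" "\<And>y. y \<in> S \<Longrightarrow> f y = g y"
  shows "deriv f x = deriv g x"
  by (rule deriv_cong_ev) (use assms in \<open>auto simp: eventually_nhds\<close>)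

lemma Cn_cong:
  assumes "open S" "\<And>x. x \<in> S \<Longrightarrow> f x = g x" "Cn n S f"
  shows "Cn n S g"
  using assms
proof (induction n arbitrary: f g)
  case (Suc n)
  then have "\<forall>s\<in>S. g differentiable at s"
    using differentiable_cong_open by (metis Cn.simps(2))
  moreover have "x \<in> S \<Longrightarrow> deriv f x = deriv g x" for x
    by (rule deriv_cong_open[OF Suc.prems(1) _ Suc.prems(2)])
  then have "Cn n S (deriv g)"
    using Suc.IH[OF Suc.prems(1), of "deriv f" "deriv g"] Suc.prems(3) by simp
  ultimately show ?case by simp
qed simp

lemma Cn_const: "Cn n S (\<lambda>_. c)"
proof (induction n arbitrary: c)
  case (Suc n)
  have "deriv (\<lambda>_. c) = (\<lambda>_. 0::real)" by (simp add: fun_eq_iff)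
  then show ?case using Suc by simp
qed simp

lemma Cn_add:
  assumes "open S" "Cn n S f" "Cn n S g"
  shows "Cn n S (\<lambda>x. f x + g x)"
  using assms
proof (induction n arbitrary: f g)
  case (Suc n)
  then have diff: "\<forall>s\<in>S. f differentiable at s" "\<forall>s\<in>S. g differentiable at s" by auto
  have "x \<in> S \<Longrightarrow> deriv f x + deriv g x = deriv (\<lambda>x. f x + g x) x" for x
    using diff by (auto intro!: DERIV_imp_deriv[symmetric] derivative_eq_intros
        simp: DERIV_deriv_iff_real_differentiable)
  moreover have "Cn n S (\<lambda>x. deriv f x + deriv g x)"
    using Suc by simp
  ultimately have "Cn n S (deriv (\<lambda>x. f x + g x))" by (rule Cn_cong[OF Suc.prems(1)])
  moreover have "\<forall>s\<in>S. (\<lambda>x. f x + g x) differentiable at s" using diff by auto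
  ultimately show ?case by simp
qed simp

lemma Cn_mult:
  assumes "open S" "Cn n S f" "Cn n S g"
  shows "Cn n S (\<lambda>x. f x * g x)"
  using assms
proof (induction n arbitrary: f g)
  case (Suc n)
  then have diff: "\<forall>s\<in>S. f differentiable at s" "\<forall>s\<in>S. g differentiable at s" by auto
  have "deriv f x * g x + f x * deriv g x = deriv (\<lambda>x. f x * g x) x" if "x \<in> S" for x
  proof -
    have "(f has_real_derivative deriv f x) (at x)" "(g has_real_derivative deriv g x) (at x)"
      using diff that DERIV_deriv_iff_real_differentiable by blast+
    from DERIV_mult'[OF this] show ?thesis by (simp add: DERIV_imp_deriv mult.commute)
  qed
  moreover have "Cn n S (\<lambda>x. deriv f x * g x + f x * deriv g x)"
  proof -
    have c: "Cn n S (deriv f)" "Cn n S (deriv g)" "Cn n S f" "Cn n S g"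
      using Suc.prems(2,3) Cn_Suc_imp by auto
    show ?thesis
      by (rule Cn_add[OF Suc.prems(1) Suc.IH[OF Suc.prems(1) c(1,4)] Suc.IH[OF Suc.prems(1) c(3,2)]])
  qed
  ultimately have "Cn n S (deriv (\<lambda>x. f x * g x))" by (rule Cn_cong[OF Suc.prems(1)])
  moreover have "\<forall>s\<in>S. (\<lambda>x. f x * g x) differentiable at s" using diff by auto
  ultimately show ?case by simp
qed simp

lemma Cn_poly:
  assumes "open S" "Cn n S f"
  shows "Cn n S (\<lambda>x. poly p (f x))"
proof (induction p)
  case 0
  then show ?case using Cn_const by simp
next
  case (pCons a p)
  have "Cn n S (\<lambda>x. a + f x * poly p (f x))"
    by (rule Cn_add[OF assms(1) Cn_const Cn_mult[OF assms pCons.IH]])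
  then show ?case by simp
qed

lemma Cn_higher_differentiable:
  assumes "Cn (Suc n) S f" "s \<in> S"
  shows "(deriv ^^ n) f differentiable at s"
  using assms
proof (induction n arbitrary: f)
  case (Suc n)
  then have "(deriv ^^ n) (deriv f) differentiable at s" by simp
  then show ?case by (simp add: funpow_Suc_right del: funpow.simps)
qed simp

lemma Cn_smooth:
  assumes "\<And>n. Cn n S f"
  shows "smooth_on S f"
  unfolding smooth_on_def
proof (intro exI[of _ "\<lambda>n. (deriv ^^ n) f"] conjI ballI allI)
  fix n s
  assume "s \<in> S"
  then have "(deriv ^^ n) f differentiable at s" using Cn_higher_differentiable assms by blast
  then show "((deriv ^^ n) f has_real_derivative (deriv ^^ Suc n) f s) (at s)"
    by (simp add: DERIV_deriv_iff_real_differentiable)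
qed simp

text \<open>Bootstrap regularity: a solution of the autonomous second order equation
  \<open>f'' = P(f)\<close> with \<open>P\<close> a polynomial is \<open>C\<^sup>\<infinity>\<close> on an open set, since \<open>f \<in> C\<^sup>n\<close> forces
  \<open>f'' \<in> C\<^sup>n\<close>, i.e. \<open>f \<in> C\<^sup>n\<^sup>+\<^sup>2\<close>.\<close>
lemma smooth_of_polynomial_ode:
  fixes f f1 :: "real \<Rightarrow> real" and p :: "real poly"
  assumes S: "open S"
    and f: "\<And>u. u \<in> S \<Longrightarrow> (f has_real_derivative f1 u) (at u)"
    and f1: "\<And>u. u \<in> S \<Longrightarrow> (f1 has_real_derivative poly p (f u)) (at u)"
  shows "smooth_on S f \<and> (\<forall>u\<in>S. deriv (deriv f) u = poly p (f u))"
proof -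
  have deriv_f: "u \<in> S \<Longrightarrow> f1 u = deriv f u" for u
    using f DERIV_imp_deriv by metis
  have ode: "deriv (deriv f) u = poly p (f u)" if "u \<in> S" for u
    using deriv_cong_open[OF S that deriv_f] DERIV_imp_deriv[OF f1[OF that]] by simp
  have f_diff: "\<forall>u\<in>S. f differentiable at u"
    using f real_differentiable_def by blast
  have f'_diff: "\<forall>u\<in>S. deriv f differentiable at u"
  proof
    fix u assume "u \<in> S"
    have "f1 differentiable at u" using f1[OF \<open>u \<in> S\<close>] real_differentiable_def by blast
    then show "deriv f differentiable at u"
      using differentiable_cong_open[OF S \<open>u \<in> S\<close>, of f1 "deriv f"] deriv_f by blast
  qed
  have "Cn n S f \<and> Cn n S (deriv f)" for n
  proof (induction n)
    case (Suc n)
    have "Cn n S (\<lambda>u. poly p (f u))" by (rule Cn_poly[OF S Suc.IH[THEN conjunct1]])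
    then have "Cn n S (deriv (deriv f))"
      using Cn_cong[OF S, of "\<lambda>u. poly p (f u)" "deriv (deriv f)" n] ode by simp
    then show ?case using Suc.IH f_diff f'_diff by simp
  qed simp
  then show ?thesis using Cn_smooth ode by blast
qed

locale optimality_condition =
  fixes \<mu> q1 q2 R2 :: real and \<theta> k :: "real \<Rightarrow> real"
  assumes mu_pos: "0 < \<mu>"
    and admissible: "admissible (2 * pi) \<theta> k"
    and curvature_eq: "\<And>s. s \<in> {0..2 * pi} \<Longrightarrow>
          k s = \<mu> / 2 * max 0 ((xc \<theta> s - q1)\<^sup>2 + (yc \<theta> s - q2)\<^sup>2 - R2)"
begin

definition circle_power :: "real \<Rightarrow> real" where
  "circle_power s = (xc \<theta> s - q1)\<^sup>2 + (yc \<theta> s - q2)\<^sup>2 - R2"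

text \<open>The continuous representative of the curvature, defined on all of \<open>\<real>\<close>.\<close>
definition kc :: "real \<Rightarrow> real" where
  "kc s = \<mu> / 2 * max 0 (circle_power s)"

definition support :: "real \<Rightarrow> real" where
  "support s = (xc \<theta> s - q1) * sin (\<theta> s) + (yc \<theta> s - q2) * (- cos (\<theta> s))"

definition lam :: real where
  "lam = (2 * \<mu> * area (2 * pi) \<theta> - energy (2 * pi) k) / (2 * pi)"

lemma k_eq_kc: "s \<in> {0..2 * pi} \<Longrightarrow> k s = kc s"
  using curvature_eq by (simp add: kc_def circle_power_def)

lemma theta_eq: "s \<in> {0..2 * pi} \<Longrightarrow> \<theta> s = \<theta> 0 + integral {0..s} k"
  and total_turning: "\<theta> (2 * pi) = \<theta> 0 + 2 * pi"
  and closed_cos: "integral {0..2 * pi} (\<lambda>s. cos (\<theta> s)) = 0"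
  and closed_sin: "integral {0..2 * pi} (\<lambda>s. sin (\<theta> s)) = 0"
  and k_integrable: "k integrable_on {0..2 * pi}"
  using admissible unfolding admissible_def absolutely_integrable_on_def by blast+

lemma theta_continuous: "continuous_on {0..2 * pi} \<theta>"
proof -
  have "continuous_on {0..2 * pi} (\<lambda>s. \<theta> 0 + integral {0..s} k)"
    by (intro continuous_intros indefinite_integral_continuous_1 k_integrable)
  then show ?thesis by (rule continuous_on_eq) (metis theta_eq)
qed

lemma cos_theta_continuous: "continuous_on {0..2 * pi} (\<lambda>s. cos (\<theta> s))"
  and sin_theta_continuous: "continuous_on {0..2 * pi} (\<lambda>s. sin (\<theta> s))"
  by (intro continuous_intros theta_continuous)+

lemma xc_deriv: "s \<in> {0..2 * pi} \<Longrightarrow>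
    (xc \<theta> has_real_derivative cos (\<theta> s)) (at s within {0..2 * pi})"
  using integral_has_vector_derivative[OF cos_theta_continuous]
  by (simp add: xc_def[abs_def] has_real_derivative_iff_has_vector_derivative)

lemma yc_deriv: "s \<in> {0..2 * pi} \<Longrightarrow>
    (yc \<theta> has_real_derivative sin (\<theta> s)) (at s within {0..2 * pi})"
  using integral_has_vector_derivative[OF sin_theta_continuous]
  by (simp add: yc_def[abs_def] has_real_derivative_iff_has_vector_derivative)

lemma xc_continuous: "continuous_on {0..2 * pi} (xc \<theta>)"
  and yc_continuous: "continuous_on {0..2 * pi} (yc \<theta>)"
  unfolding xc_def[abs_def] yc_def[abs_def]
  by (intro indefinite_integral_continuous_1 integrable_continuous_interval
        cos_theta_continuous sin_theta_continuous)+

lemma closed_curve: "xc \<theta> 0 = 0" "yc \<theta> 0 = 0" "xc \<theta> (2 * pi) = 0" "yc \<theta> (2 * pi) = 0"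
  using closed_cos closed_sin by (simp_all add: xc_def yc_def)

lemma kc_continuous: "continuous_on {0..2 * pi} kc"
  unfolding kc_def[abs_def] circle_power_def
  by (intro continuous_intros xc_continuous yc_continuous)

lemma kc_periodic: "kc (2 * pi) = kc 0"
  using closed_curve by (simp add: kc_def circle_power_def)

lemma theta_deriv:
  assumes s: "s \<in> {0..2 * pi}"
  shows "(\<theta> has_real_derivative kc s) (at s within {0..2 * pi})"
proof -
  have "((\<lambda>u. \<theta> 0 + integral {0..u} kc) has_real_derivative kc s) (at s within {0..2 * pi})"
    using integral_has_vector_derivative[OF kc_continuous s]
    by (auto intro!: derivative_eq_intros simp: has_real_derivative_iff_has_vector_derivative)
  then show ?thesis
  proof (rule has_field_derivative_transform_within[where d=1])
    fix u assume u: "u \<in> {0..2 * pi}"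
    have "integral {0..u} kc = integral {0..u} k"
      by (rule integral_cong) (use u k_eq_kc in auto)
    then show "\<theta> 0 + integral {0..u} kc = \<theta> u" using theta_eq[OF u] by linarith
  qed (use s in auto)
qed

lemma circle_power_deriv:
  assumes s: "s \<in> {0..2 * pi}"
  shows "(circle_power has_real_derivative
      2 * ((xc \<theta> s - q1) * cos (\<theta> s) + (yc \<theta> s - q2) * sin (\<theta> s))) (at s within {0..2 * pi})"
  unfolding circle_power_def[abs_def]
  by (rule derivative_eq_intros xc_deriv[OF s] yc_deriv[OF s] refl)+ (simp add: algebra_simps)

text \<open>Differentiating
  \<open>\<langle>QM, n\<rangle>\<close> gives \<open>k \<langle>QM, \<tau>\<rangle>\<close>, and differentiating \<open>k\<^sup>2 = \<mu>\<^sup>2/4 (circle_power\<^sup>+)\<^sup>2\<close>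
  gives the same term times \<open>2\<mu>\<close>, also at the points where \<open>k\<close> vanishes.\<close>
lemma first_integral_deriv:
  assumes s: "s \<in> {0..2 * pi}"
  shows "((\<lambda>s. support s - (kc s)\<^sup>2 / (2 * \<mu>)) has_real_derivative 0) (at s within {0..2 * pi})"
proof -
  have kc_sq: "(\<lambda>s. support s - (kc s)\<^sup>2 / (2 * \<mu>))
      = (\<lambda>s. support s - \<mu> / 8 * pos_sq (circle_power s))"
    using mu_pos by (simp add: fun_eq_iff kc_def pos_sq_def power_mult_distrib power2_eq_square)
  have "((\<lambda>s. support s - \<mu> / 8 * pos_sq (circle_power s)) has_real_derivative 0)
      (at s within {0..2 * pi})"
    unfolding support_def[abs_def]
    by (rule derivative_eq_intros xc_deriv[OF s] yc_deriv[OF s] theta_deriv[OF s]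
          circle_power_deriv[OF s] pos_sq_chain refl)+
       (simp add: kc_def field_simps)
  then show ?thesis unfolding kc_sq .
qed

text \<open>Green's formula for the support function: the terms in \<open>Q\<close> integrate to zero
  because the curve is closed.\<close>
lemma support_integral: "(support has_integral 2 * area (2 * pi) \<theta>) {0..2 * pi}"
proof -
  have split: "support s = (xc \<theta> s * sin (\<theta> s) - yc \<theta> s * cos (\<theta> s))
      - q1 * sin (\<theta> s) + q2 * cos (\<theta> s)" for s
    by (simp add: support_def algebra_simps)
  have "((\<lambda>s. xc \<theta> s * sin (\<theta> s) - yc \<theta> s * cos (\<theta> s)) has_integral 2 * area (2 * pi) \<theta>)
      {0..2 * pi}"
    using integrable_continuous_interval[of 0 "2 * pi"
        "\<lambda>s. xc \<theta> s * sin (\<theta> s) - yc \<theta> s * cos (\<theta> s)"]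
    by (simp add: area_def has_integral_integral continuous_intros xc_continuous yc_continuous
        cos_theta_continuous sin_theta_continuous)
  moreover have "((\<lambda>s. sin (\<theta> s)) has_integral 0) {0..2 * pi}"
    using integrable_continuous_interval[OF sin_theta_continuous] closed_sin
    by (metis has_integral_integral)
  moreover have "((\<lambda>s. cos (\<theta> s)) has_integral 0) {0..2 * pi}"
    using integrable_continuous_interval[OF cos_theta_continuous] closed_cos
    by (metis has_integral_integral)
  ultimately have "((\<lambda>s. (xc \<theta> s * sin (\<theta> s) - yc \<theta> s * cos (\<theta> s))
      - q1 * sin (\<theta> s) + q2 * cos (\<theta> s)) has_integral 2 * area (2 * pi) \<theta> - q1 * 0 + q2 * 0)
      {0..2 * pi}"
    by (intro has_integral_add has_integral_diff has_integral_mult_right)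
  then show ?thesis unfolding split by simp
qed

lemma kc_sq_integral: "((\<lambda>s. (kc s)\<^sup>2) has_integral 2 * energy (2 * pi) k) {0..2 * pi}"
proof -
  have "((\<lambda>s. (kc s)\<^sup>2) has_integral integral {0..2 * pi} (\<lambda>s. (kc s)\<^sup>2)) {0..2 * pi}"
    using kc_continuous
    by (intro integrable_integral integrable_continuous_interval continuous_intros)
  moreover have "integral {0..2 * pi} (\<lambda>s. (kc s)\<^sup>2) = integral {0..2 * pi} (\<lambda>s. (k s)\<^sup>2)"
    by (rule integral_cong) (simp add: k_eq_kc)
  ultimately show ?thesis by (simp add: energy_def)
qed

text \<open>The value of the first integral is identified by integrating it over the boundary:
  \<open>\<integral>\<langle>QM, n\<rangle> = 2A\<close> (Green's formula, the curve being closed) and \<open>\<integral>k\<^sup>2 = 2E\<close>.\<close>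
theorem support_identity:
  assumes "s \<in> {0..2 * pi}"
  shows "support s = lam / \<mu> + (k s)\<^sup>2 / (2 * \<mu>)"
proof -
  obtain C where C: "\<And>s. s \<in> {0..2 * pi} \<Longrightarrow> support s - (kc s)\<^sup>2 / (2 * \<mu>) = C"
    using has_field_derivative_zero_constant[OF convex_real_interval(5) first_integral_deriv]
    by blast
  have "((\<lambda>s. support s - (kc s)\<^sup>2 / (2 * \<mu>)) has_integral
      2 * area (2 * pi) \<theta> - 2 * energy (2 * pi) k / (2 * \<mu>)) {0..2 * pi}"
    using has_integral_diff[OF support_integral has_integral_divide[OF kc_sq_integral, of "2 * \<mu>"]] by simp
  then have "((\<lambda>s. C) has_integral
      2 * area (2 * pi) \<theta> - 2 * energy (2 * pi) k / (2 * \<mu>)) {0..2 * pi}"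
    by (rule has_integral_cong[THEN iffD1, rotated]) (simp add: C)
  moreover have "((\<lambda>s. C) has_integral 2 * pi * C) {0..2 * pi}"
    using has_integral_const_real[of C 0 "2 * pi"] by simp
  ultimately have "2 * pi * C = 2 * area (2 * pi) \<theta> - 2 * energy (2 * pi) k / (2 * \<mu>)"
    using has_integral_unique by blast
  then have "C = lam / \<mu>"
    using mu_pos by (simp add: lam_def field_simps)
  then show ?thesis using C[OF assms] k_eq_kc[OF assms] by simp
qed

definition theta_ext :: "real \<Rightarrow> real" where
  "theta_ext = pext (2 * pi) (2 * pi) \<theta>"

definition x_ext :: "real \<Rightarrow> real" where
  "x_ext = pext (2 * pi) 0 (xc \<theta>)"

definition y_ext :: "real \<Rightarrow> real" where
  "y_ext = pext (2 * pi) 0 (yc \<theta>)"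

lemma ext_reduce:
  fixes s :: real
  defines "r \<equiv> s - 2 * pi * of_int \<lfloor>s / (2 * pi)\<rfloor>"
  shows "r \<in> {0..<2 * pi}"
    and "perext k s = kc r"
    and "x_ext s = xc \<theta> r" "y_ext s = yc \<theta> r"
    and "cos (theta_ext s) = cos (\<theta> r)" "sin (theta_ext s) = sin (\<theta> r)"
proof -
  show r: "r \<in> {0..<2 * pi}" using reduction_mod_period[of "2 * pi" s] by (simp add: r_def)
  then show "perext k s = kc r" using k_eq_kc[of r] by (simp add: perext_def r_def)
  show "x_ext s = xc \<theta> r" "y_ext s = yc \<theta> r" by (simp_all add: x_ext_def y_ext_def pext_def r_def)
  have "sin (theta_ext s) = sin (\<theta> r) \<and> cos (theta_ext s) = cos (\<theta> r)"
    by (rule sin_cos_eq_iff[THEN iffD2]) (auto simp: theta_ext_def pext_def r_def)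
  then show "cos (theta_ext s) = cos (\<theta> r)" "sin (theta_ext s) = sin (\<theta> r)" by simp_all
qed

lemma theta_ext_deriv: "(theta_ext has_real_derivative perext k s) (at s)"
  using pext_deriv[of "2 * pi" \<theta> kc "2 * pi" s] theta_deriv total_turning kc_periodic
  by (simp add: theta_ext_def ext_reduce(2))

lemma x_ext_deriv: "(x_ext has_real_derivative cos (theta_ext s)) (at s)"
  and y_ext_deriv: "(y_ext has_real_derivative sin (theta_ext s)) (at s)"
proof -
  have "cos (\<theta> (2 * pi)) = cos (\<theta> 0)" "sin (\<theta> (2 * pi)) = sin (\<theta> 0)"
    using total_turning by simp_all
  then show "(x_ext has_real_derivative cos (theta_ext s)) (at s)"
    "(y_ext has_real_derivative sin (theta_ext s)) (at s)"
    using pext_deriv[of "2 * pi" "xc \<theta>" "\<lambda>s. cos (\<theta> s)" 0 s] xc_deriv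
      pext_deriv[of "2 * pi" "yc \<theta>" "\<lambda>s. sin (\<theta> s)" 0 s] yc_deriv closed_curve
    by (simp_all add: x_ext_def y_ext_def ext_reduce(5,6))
qed

lemma perext_k_eq: "perext k s = \<mu> / 2 * max 0 ((x_ext s - q1)\<^sup>2 + (y_ext s - q2)\<^sup>2 - R2)"
  by (simp add: ext_reduce kc_def circle_power_def)

lemma support_identity_ext:
  "(x_ext s - q1) * sin (theta_ext s) + (y_ext s - q2) * (- cos (theta_ext s))
     = lam / \<mu> + (perext k s)\<^sup>2 / (2 * \<mu>)"
proof -
  define r where "r = s - 2 * pi * of_int \<lfloor>s / (2 * pi)\<rfloor>"
  have r: "r \<in> {0..2 * pi}" using ext_reduce(1)[of s] by (auto simp: r_def)
  show ?thesis
    using support_identity[OF r] k_eq_kc[OF r] ext_reduce[of s] by (simp add: support_def r_def)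
qed

text \<open>\<open>\<mu> \<langle>QM, \<tau>\<rangle>\<close>: on an arc where \<open>k > 0\<close> this is \<open>k'\<close>.\<close>
definition tangential :: "real \<Rightarrow> real" where
  "tangential u = \<mu> * ((x_ext u - q1) * cos (theta_ext u) + (y_ext u - q2) * sin (theta_ext u))"

text \<open>\<open>(\<mu> \<langle>QM, \<tau>\<rangle>)' = \<mu> (1 - k \<langle>QM, n\<rangle>)\<close>, and the support identity turns the right-hand
  side into \<open>\<mu> - \<lambda> k - k\<^sup>3/2\<close>.\<close>
lemma tangential_deriv:
  "(tangential has_real_derivative \<mu> - lam * perext k u - (perext k u) ^ 3 / 2) (at u)"
proof -
  have "(tangential has_real_derivative
      \<mu> * ((sin (theta_ext u))\<^sup>2 + (cos (theta_ext u))\<^sup>2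
         - perext k u * ((x_ext u - q1) * sin (theta_ext u) + (y_ext u - q2) * (- cos (theta_ext u)))))
      (at u)"
    unfolding tangential_def[abs_def]
    by (rule derivative_eq_intros x_ext_deriv y_ext_deriv theta_ext_deriv refl)+
       (simp add: algebra_simps power2_eq_square,
        metis sin_cos_squared_add3 distrib_left mult.right_neutral)
  then have "(tangential has_real_derivative
      \<mu> * (1 - perext k u * (lam / \<mu> + (perext k u)\<^sup>2 / (2 * \<mu>)))) (at u)"
    by (simp only: support_identity_ext sin_cos_squared_add)
  moreover have "\<mu> * (1 - perext k u * (lam / \<mu> + (perext k u)\<^sup>2 / (2 * \<mu>)))
      = \<mu> - lam * perext k u - (perext k u) ^ 3 / 2"
    using mu_pos by (simp add: field_simps power2_eq_square power3_eq_cube)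
  ultimately show ?thesis by simp
qed

text \<open>Where \<open>k > 0\<close> the positive part in the optimality condition is inactive, so
  \<open>k = \<mu>/2 (|M - Q|\<^sup>2 - R2)\<close> is differentiable with \<open>k' = \<mu> \<langle>QM, \<tau>\<rangle>\<close>.\<close>
lemma curvature_deriv_on_positive_arc:
  assumes S: "open S" and pos: "\<And>u. u \<in> S \<Longrightarrow> perext k u > 0" and u: "u \<in> S"
  shows "(perext k has_real_derivative tangential u) (at u)"
proof -
  have "((\<lambda>u. \<mu> / 2 * ((x_ext u - q1)\<^sup>2 + (y_ext u - q2)\<^sup>2 - R2)) has_real_derivative tangential u)
      (at u)"
    by (rule derivative_eq_intros x_ext_deriv y_ext_deriv refl)+
       (simp add: tangential_def algebra_simps)
  moreover have "\<mu> / 2 * ((x_ext v - q1)\<^sup>2 + (y_ext v - q2)\<^sup>2 - R2) = perext k v" if "v \<in> S" for v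
    using pos[OF that] mu_pos by (simp add: perext_k_eq max_def zero_less_mult_iff split: if_splits)
  ultimately show ?thesis
    by (rule has_field_derivative_transform_within_open[OF _ S u]) simp
qed

end

theorem proposition2p4:
  fixes \<mu> lam1 lam2 c :: real and \<theta> k :: "real \<Rightarrow> real"
  assumes "\<mu> > 0"
    and "optimal \<mu> \<theta> k"
    and "\<forall>s\<in>{0..2*pi}. k s = \<mu> / 2 * negpart
           ((lam1\<^sup>2 + lam2\<^sup>2) / \<mu>\<^sup>2 + 2 * c / \<mu>
            - (xc \<theta> s - lam2 / \<mu>)\<^sup>2 - (yc \<theta> s + lam1 / \<mu>)\<^sup>2)"
  shows "(let lam = (2 * \<mu> * area (2*pi) \<theta> - energy (2*pi) k) / (2 * pi) in
           (\<forall>a b. (\<forall>s\<in>{a<..<b}. perext k s > 0) \<longrightarrow>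
              smooth_on {a<..<b} (perext k) \<and>
              (\<forall>s\<in>{a<..<b}. deriv (deriv (perext k)) s
                   = - ((perext k s) ^ 3) / 2 - lam * perext k s + \<mu>)) \<and>
           (\<forall>s\<in>{0..2*pi}.
              (xc \<theta> s - lam2 / \<mu>) * sin (\<theta> s) + (yc \<theta> s - (- lam1 / \<mu>)) * (- cos (\<theta> s))
              = lam / \<mu> + (k s)\<^sup>2 / (2 * \<mu>)))"
proof -
  interpret opt: optimality_condition \<mu> "lam2 / \<mu>" "- lam1 / \<mu>"
      "(lam1\<^sup>2 + lam2\<^sup>2) / \<mu>\<^sup>2 + 2 * c / \<mu>" \<theta> k
    using assms by unfold_locales (auto simp: optimal_def negpart_def)
  define p :: "real poly" where "p = [:\<mu>, - opt.lam, 0, - 1 / 2:]"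
  have poly_p: "poly p t = \<mu> - opt.lam * t - t ^ 3 / 2" for t
    by (simp add: p_def algebra_simps power3_eq_cube)
  have "smooth_on {a<..<b} (perext k) \<and>
      (\<forall>s\<in>{a<..<b}. deriv (deriv (perext k)) s = - ((perext k s) ^ 3) / 2 - opt.lam * perext k s + \<mu>)"
    if "\<forall>s\<in>{a<..<b}. perext k s > 0" for a b
    using smooth_of_polynomial_ode[of "{a<..<b}" "perext k" opt.tangential p]
      opt.curvature_deriv_on_positive_arc[of "{a<..<b}"] opt.tangential_deriv that
    by (simp add: poly_p)
  moreover have "\<forall>s\<in>{0..2*pi}.
      (xc \<theta> s - lam2 / \<mu>) * sin (\<theta> s) + (yc \<theta> s - (- lam1 / \<mu>)) * (- cos (\<theta> s))
      = opt.lam / \<mu> + (k s)\<^sup>2 / (2 * \<mu>)"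
    using opt.support_identity unfolding opt.support_def by simp
  ultimately show ?thesis unfolding Let_def opt.lam_def by blast
qed

end
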